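(* Let $s,\alpha\in\mathbb{R}$ with $s+\alpha\ge0$, $\alpha<3/4$ and $s>-3/4$. Then for every $t\in\mathbb{R}$ the bilinear operator $B_2$ defined in the context maps $\dot H^s\times\dot H^s$ into $\dot H^{s+\alpha}$ and satisfies $$\|B_2(u,v)\|_{\dot H^{s+\alpha}}\le c_2'(s,\alpha)\|u\|_{\dot H^s}\|v\|_{\dot H^s},$$ with a constant $c_2'(s,\alpha)$ depending only on $s,\alpha$.
   Context: Write $\mathbb{Z}_0=\mathbb{Z}\setminus\{0\}$. For $s\in\mathbb{R}$, $\dot H^s$ denotes the Hilbert space of complex sequences $v=(v_k)_{k\in\mathbb{Z}_0}$ with $\|v\|_{\dot H^s}^2=\sum_{k\in\mathbb{Z}_0}|k|^{2s}|v_k|^2<\infty$. For $t\in\mathbb{R}$, $$B_2(u,v)_k=\sum_{k_1+k_2=k,\ k_1,k_2\in\mathbb{Z}_0}\frac{e^{3ikk_1k_2t}u_{k_1}v_{k_2}}{k_1k_2},\qquad k\in\mathbb{Z}_0.$$ *)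

theory Defs
  imports "HOL-Analysis.Analysis"
begin

text \<open>Sequences indexed by the nonzero integers are modelled as functions
  int => complex; the value at 0 is ignored everywhere.\<close>

definition Z0 :: "int set" where
  "Z0 = UNIV - {0}"

definition in_Hdot :: "real \<Rightarrow> (int \<Rightarrow> complex) \<Rightarrow> bool" where
  "in_Hdot s v \<longleftrightarrow> (\<lambda>k. \<bar>real_of_int k\<bar> powr (2 * s) * (cmod (v k))^2) summable_on Z0"

definition Hdot_norm :: "real \<Rightarrow> (int \<Rightarrow> complex) \<Rightarrow> real" where
  "Hdot_norm s v = sqrt (\<Sum>\<^sub>\<infinity>k\<in>Z0. \<bar>real_of_int k\<bar> powr (2 * s) * (cmod (v k))^2)"

definition B2_term :: "real \<Rightarrow> (int \<Rightarrow> complex) \<Rightarrow> (int \<Rightarrow> complex) \<Rightarrow> int \<Rightarrow> int \<Rightarrow> complex" where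
  "B2_term t u v k k1 =
     exp (\<i> * of_real (3 * real_of_int k * real_of_int k1 * real_of_int (k - k1) * t))
       * u k1 * v (k - k1) / (of_int k1 * of_int (k - k1))"

definition B2_index :: "int \<Rightarrow> int set" where
  "B2_index k = {k1. k1 \<noteq> 0 \<and> k - k1 \<noteq> 0}"

definition B2 :: "real \<Rightarrow> (int \<Rightarrow> complex) \<Rightarrow> (int \<Rightarrow> complex) \<Rightarrow> int \<Rightarrow> complex" where
  "B2 t u v k = (\<Sum>\<^sub>\<infinity>k1\<in>B2_index k. B2_term t u v k k1)"

end

theory Submission
  imports Defs
begin

text \<open>With a(k) = |k|^s |u k| and b(k) = |k|^s |v k|, the weighted summand is
  |k|^(s+\<alpha>) |B2_term k k1| = K(k,k1) a(k1) b(k-k1), where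
  K(k,k1) = |k|^(s+\<alpha>) |k1|^(-1-s) |k-k1|^(-1-s).
  Because |k| \<le> 2 max(|k1|, |k-k1|), s + \<alpha> \<ge> 0 and \<alpha> \<le> 1, the smaller of |k1|, |k-k1|
  absorbs everything: K(k,k1)^2 \<le> 4^(s+\<alpha>) (|k1|^(-r) + |k-k1|^(-r)) with r = 4 + 2s - 2\<alpha> > 1,
  so the squares of the kernel are summable in k1 uniformly in k. Cauchy--Schwarz in k1 bounds
  |k|^(2(s+\<alpha>)) |B2 k|^2 by a constant times the convolution (a^2 * b^2)(k), and summing over k
  (Young's inequality for l^1 convolutions) gives C^2 \<parallel>u\<parallel>^2 \<parallel>v\<parallel>^2.\<close>

lemma has_sum_sum:
  fixes f :: "'i \<Rightarrow> 'a \<Rightarrow> 'b::topological_comm_monoid_add"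
  assumes "finite I" "\<And>i. i \<in> I \<Longrightarrow> (f i has_sum S i) A"
  shows "((\<lambda>x. \<Sum>i\<in>I. f i x) has_sum (\<Sum>i\<in>I. S i)) A"
  using assms by (induction I rule: finite_induct) (auto intro: has_sum_add)

lemma summable_on_int_abs_powr:
  fixes a :: real
  assumes "a < -1"
  shows "(\<lambda>j::int. \<bar>real_of_int j\<bar> powr a) summable_on UNIV"
proof -
  let ?f = "\<lambda>j::int. \<bar>real_of_int j\<bar> powr a"
  have nat: "(\<lambda>n::nat. real n powr a) summable_on UNIV"
    using assms by (subst summable_on_UNIV_nonneg_real_iff) (auto simp: summable_real_powr_iff)
  have "?f summable_on range int"
    by (subst summable_on_reindex) (auto simp: o_def nat)
  moreover have "?f summable_on range (\<lambda>n. - int n)"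
    by (subst summable_on_reindex) (auto simp: o_def nat inj_on_def)
  ultimately have "?f summable_on (range int \<union> range (\<lambda>n. - int n))"
    by (rule summable_on_union)
  moreover have "range int \<union> range (\<lambda>n. - int n) = (UNIV :: int set)"
    by (auto, metis int_cases2 rangeI)
  ultimately show ?thesis by simp
qed

lemma has_sum_reflect:
  fixes f :: "'a::ab_group_add \<Rightarrow> 'b::topological_comm_monoid_add"
  shows "((\<lambda>j. f (k - j)) has_sum S) UNIV \<longleftrightarrow> (f has_sum S) UNIV"
  by (rule has_sum_reindex_bij_witness[where i="\<lambda>j. k - j" and j="\<lambda>j. k - j"]) auto

lemma infsum_Cauchy_Schwarz:
  fixes f g :: "'a \<Rightarrow> real"
  assumes f: "(\<lambda>x. (f x)\<^sup>2) summable_on A" and g: "(\<lambda>x. (g x)\<^sup>2) summable_on A"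
    and nonneg: "\<And>x. x \<in> A \<Longrightarrow> f x \<ge> 0" "\<And>x. x \<in> A \<Longrightarrow> g x \<ge> 0"
  shows "(\<lambda>x. f x * g x) summable_on A"
    and "(\<Sum>\<^sub>\<infinity>x\<in>A. f x * g x)\<^sup>2 \<le> (\<Sum>\<^sub>\<infinity>x\<in>A. (f x)\<^sup>2) * (\<Sum>\<^sub>\<infinity>x\<in>A. (g x)\<^sup>2)"
proof -
  have "(\<lambda>x. ((f x)\<^sup>2 + (g x)\<^sup>2) / 2) summable_on A"
    using summable_on_cmult_left[OF summable_on_add[OF f g], of "1/2"] by simp
  moreover have "f x * g x \<le> ((f x)\<^sup>2 + (g x)\<^sup>2) / 2" for x
    using sum_squares_bound[of "f x" "g x"] by (simp add: power2_eq_square)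
  ultimately show fg: "(\<lambda>x. f x * g x) summable_on A"
    by (rule summable_on_comparison_test) (simp_all add: nonneg)
  define F G where "F = (\<Sum>\<^sub>\<infinity>x\<in>A. (f x)\<^sup>2)" and "G = (\<Sum>\<^sub>\<infinity>x\<in>A. (g x)\<^sup>2)"
  have "(\<Sum>\<^sub>\<infinity>x\<in>A. f x * g x) \<le> sqrt F * sqrt G"
  proof (rule infsum_le_finite_sums[OF fg])
    fix B assume B: "finite B" "B \<subseteq> A"
    have "(\<Sum>x\<in>B. f x * g x)\<^sup>2 \<le> (\<Sum>x\<in>B. (f x)\<^sup>2) * (\<Sum>x\<in>B. (g x)\<^sup>2)"
      by (rule Cauchy_Schwarz_ineq_sum)
    also have "\<dots> \<le> F * G"
      unfolding F_def G_def using B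
      by (intro mult_mono finite_sum_le_infsum f g infsum_nonneg sum_nonneg) auto
    finally show "(\<Sum>x\<in>B. f x * g x) \<le> sqrt F * sqrt G"
      by (metis real_le_rsqrt real_sqrt_mult)
  qed
  moreover have "0 \<le> (\<Sum>\<^sub>\<infinity>x\<in>A. f x * g x)"
    by (rule infsum_nonneg) (simp add: nonneg)
  ultimately have "(\<Sum>\<^sub>\<infinity>x\<in>A. f x * g x)\<^sup>2 \<le> (sqrt F * sqrt G)\<^sup>2"
    by (rule power_mono)
  also have "\<dots> = F * G"
    unfolding F_def G_def by (simp add: power_mult_distrib infsum_nonneg)
  finally show "(\<Sum>\<^sub>\<infinity>x\<in>A. f x * g x)\<^sup>2 \<le> F * G" .
qed

lemma summable_on_convolution:
  fixes f g :: "'a::ab_group_add \<Rightarrow> real"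
  assumes "f summable_on UNIV" "g summable_on UNIV" "\<And>x. f x \<ge> 0" "\<And>x. g x \<ge> 0"
  shows "(\<lambda>j. f j * g (k - j)) summable_on UNIV"
proof (rule summable_on_comparison_test)
  show "(\<lambda>j. f j * (\<Sum>\<^sub>\<infinity>x. g x)) summable_on UNIV"
    using assms(1) by (rule summable_on_cmult_left)
  show "f j * g (k - j) \<le> f j * (\<Sum>\<^sub>\<infinity>x. g x)" for j
    using finite_sum_le_infsum[OF assms(2), of "{k - j}"] assms(3,4)
    by (intro mult_left_mono) auto
qed (simp add: assms)

lemma infsum_convolution_le:
  fixes f g :: "'a::ab_group_add \<Rightarrow> real"
  assumes f: "f summable_on UNIV" and g: "g summable_on UNIV"
    and nonneg: "\<And>x. f x \<ge> 0" "\<And>x. g x \<ge> 0"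
  shows "(\<lambda>k. \<Sum>\<^sub>\<infinity>j. f j * g (k - j)) summable_on UNIV"
    and "(\<Sum>\<^sub>\<infinity>k. \<Sum>\<^sub>\<infinity>j. f j * g (k - j)) \<le> (\<Sum>\<^sub>\<infinity>j. f j) * (\<Sum>\<^sub>\<infinity>j. g j)"
proof -
  let ?c = "\<lambda>k. \<Sum>\<^sub>\<infinity>j. f j * g (k - j)"
  have partial: "sum ?c K \<le> (\<Sum>\<^sub>\<infinity>j. f j) * (\<Sum>\<^sub>\<infinity>j. g j)" if "finite K" for K
  proof -
    have has_sum: "((\<lambda>j. \<Sum>k\<in>K. f j * g (k - j)) has_sum sum ?c K) UNIV"
      using that summable_on_convolution[OF assms] by (intro has_sum_sum) auto
    then have summable: "(\<lambda>j. \<Sum>k\<in>K. f j * g (k - j)) summable_on UNIV"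
      by (rule has_sum_imp_summable)
    from has_sum have "sum ?c K = (\<Sum>\<^sub>\<infinity>j. \<Sum>k\<in>K. f j * g (k - j))"
      by (simp add: infsumI)
    also have "\<dots> \<le> (\<Sum>\<^sub>\<infinity>j. f j * (\<Sum>\<^sub>\<infinity>i. g i))"
    proof (rule infsum_mono[OF summable summable_on_cmult_left[OF f]])
      fix j
      have "(\<Sum>k\<in>K. g (k - j)) = sum g ((\<lambda>k. k - j) ` K)"
        by (simp add: sum.reindex inj_on_def)
      also have "\<dots> \<le> (\<Sum>\<^sub>\<infinity>i. g i)"
        using that by (intro finite_sum_le_infsum g) (auto simp: nonneg)
      finally show "(\<Sum>k\<in>K. f j * g (k - j)) \<le> f j * (\<Sum>\<^sub>\<infinity>i. g i)"
        by (simp add: sum_distrib_left[symmetric] mult_left_mono nonneg)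
    qed
    also have "\<dots> = (\<Sum>\<^sub>\<infinity>j. f j) * (\<Sum>\<^sub>\<infinity>j. g j)"
      by (rule infsum_cmult_left[OF f])
    finally show ?thesis .
  qed
  have nonneg_c: "?c k \<ge> 0" for k
    by (rule infsum_nonneg) (simp add: nonneg)
  show summable_c: "?c summable_on UNIV"
    by (rule nonneg_bdd_above_summable_on) (auto simp: nonneg_c intro!: bdd_aboveI2 partial)
  show "(\<Sum>\<^sub>\<infinity>k. ?c k) \<le> (\<Sum>\<^sub>\<infinity>j. f j) * (\<Sum>\<^sub>\<infinity>j. g j)"
    by (rule infsum_le_finite_sums[OF summable_c partial])
qed

lemma powr_kernel_le:
  fixes x y z s \<alpha> :: real
  assumes "1 \<le> x" "x \<le> y" "0 \<le> z" "z \<le> x + y" "0 \<le> s + \<alpha>" "\<alpha> \<le> 1"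
  shows "z powr (s + \<alpha>) * x powr (-1 - s) * y powr (-1 - s) \<le> 2 powr (s + \<alpha>) * x powr (\<alpha> - 2 - s)"
proof -
  have "z powr (s + \<alpha>) \<le> (2 * y) powr (s + \<alpha>)"
    using assms by (intro powr_mono2) auto
  then have "z powr (s + \<alpha>) * y powr (-1 - s) \<le> 2 powr (s + \<alpha>) * (y powr (s + \<alpha>) * y powr (-1 - s))"
    by (simp add: powr_mult mult.assoc[symmetric] mult_right_mono)
  also have "y powr (s + \<alpha>) * y powr (-1 - s) = y powr (\<alpha> - 1)"
    by (simp add: powr_add[symmetric])
  also have "y powr (\<alpha> - 1) \<le> x powr (\<alpha> - 1)"
    using assms by (intro powr_mono2') auto
  finally have "z powr (s + \<alpha>) * y powr (-1 - s) * x powr (-1 - s)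
      \<le> 2 powr (s + \<alpha>) * x powr (\<alpha> - 1) * x powr (-1 - s)"
    by (intro mult_right_mono) simp_all
  also have "\<dots> = 2 powr (s + \<alpha>) * x powr (\<alpha> - 2 - s)"
    by (simp add: mult.assoc powr_add[symmetric] algebra_simps)
  finally show ?thesis
    by (simp add: ac_simps)
qed

lemma powr_square: "(w powr e)\<^sup>2 = w powr (2 * e)" for w e :: real
  by (simp add: power2_eq_square powr_add[symmetric])

lemma powr_kernel_sq_le:
  fixes x y z s \<alpha> :: real
  assumes "1 \<le> x" "1 \<le> y" "0 \<le> z" "z \<le> x + y" "0 \<le> s + \<alpha>" "\<alpha> \<le> 1"
  shows "(z powr (s + \<alpha>) * x powr (-1 - s) * y powr (-1 - s))\<^sup>2
           \<le> 4 powr (s + \<alpha>) * (x powr (2 * \<alpha> - 4 - 2 * s) + y powr (2 * \<alpha> - 4 - 2 * s))"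
proof -
  have four: "4 powr (s + \<alpha>) = 2 powr (2 * (s + \<alpha>))"
    using powr_powr[of 2 2 "s + \<alpha>"] by simp
  let ?e = "2 * \<alpha> - 4 - 2 * s"
  have sq: "(z powr (s + \<alpha>) * x powr (-1 - s) * y powr (-1 - s))\<^sup>2 \<le> 4 powr (s + \<alpha>) * x powr ?e"
    if "1 \<le> x" "x \<le> y" "z \<le> x + y" for x y
  proof -
    have "(z powr (s + \<alpha>) * x powr (-1 - s) * y powr (-1 - s))\<^sup>2
            \<le> (2 powr (s + \<alpha>) * x powr (\<alpha> - 2 - s))\<^sup>2"
      using powr_kernel_le[OF that(1,2) assms(3) that(3) assms(5,6)] by (intro power_mono) auto
    also have "\<dots> = 2 powr (2 * (s + \<alpha>)) * x powr (2 * (\<alpha> - 2 - s))"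
      by (simp add: power_mult_distrib powr_square)
    also have "\<dots> = 4 powr (s + \<alpha>) * x powr ?e"
      by (subst four) (simp add: algebra_simps)
    finally show ?thesis .
  qed
  show ?thesis
  proof (cases "x \<le> y")
    case True
    then have "(z powr (s + \<alpha>) * x powr (-1 - s) * y powr (-1 - s))\<^sup>2 \<le> 4 powr (s + \<alpha>) * x powr ?e"
      using sq assms by simp
    also have "\<dots> \<le> 4 powr (s + \<alpha>) * (x powr ?e + y powr ?e)"
      by (intro mult_left_mono) simp_all
    finally show ?thesis .
  next
    case False
    have "(z powr (s + \<alpha>) * x powr (-1 - s) * y powr (-1 - s))\<^sup>2
            = (z powr (s + \<alpha>) * y powr (-1 - s) * x powr (-1 - s))\<^sup>2"
      by (simp add: ac_simps)
    also have "\<dots> \<le> 4 powr (s + \<alpha>) * y powr ?e"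
      using False sq[of y x] assms by (simp add: add.commute)
    also have "\<dots> \<le> 4 powr (s + \<alpha>) * (x powr ?e + y powr ?e)"
      by (intro mult_left_mono) simp_all
    finally show ?thesis .
  qed
qed

definition weighted_coeff :: "real \<Rightarrow> (int \<Rightarrow> complex) \<Rightarrow> int \<Rightarrow> real" where
  "weighted_coeff s u k = \<bar>real_of_int k\<bar> powr s * cmod (u k)"

lemma weighted_coeff_nonneg: "weighted_coeff s u k \<ge> 0"
  by (simp add: weighted_coeff_def)

lemma weighted_coeff_at_0 [simp]: "weighted_coeff s u 0 = 0"
  by (simp add: weighted_coeff_def)

lemma weighted_coeff_sq:
  "(weighted_coeff s u k)\<^sup>2 = \<bar>real_of_int k\<bar> powr (2 * s) * (cmod (u k))\<^sup>2"
  by (simp add: weighted_coeff_def power_mult_distrib powr_square)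

text \<open>Since \<open>0 powr s = 0\<close>, the weighted coefficients vanish at \<open>k = 0\<close>, so the sums over
  \<open>Z0\<close> in the definitions of \<open>in_Hdot\<close> and \<open>Hdot_norm\<close> may be taken over all integers.\<close>

lemma in_Hdot_iff: "in_Hdot s u \<longleftrightarrow> (\<lambda>k. (weighted_coeff s u k)\<^sup>2) summable_on UNIV"
  unfolding in_Hdot_def weighted_coeff_sq[symmetric]
  by (rule summable_on_cong_neutral) (auto simp: Z0_def)

lemma Hdot_norm_eq: "Hdot_norm s u = sqrt (\<Sum>\<^sub>\<infinity>k. (weighted_coeff s u k)\<^sup>2)"
  unfolding Hdot_norm_def weighted_coeff_sq[symmetric]
  by (subst infsum_cong_neutral[where T=UNIV and g="\<lambda>k. (weighted_coeff s u k)\<^sup>2"])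
     (auto simp: Z0_def)

definition B2_kernel :: "real \<Rightarrow> real \<Rightarrow> int \<Rightarrow> int \<Rightarrow> real" where
  "B2_kernel s \<alpha> k k1 =
     \<bar>real_of_int k\<bar> powr (s + \<alpha>) * \<bar>real_of_int k1\<bar> powr (-1 - s) * \<bar>real_of_int (k - k1)\<bar> powr (-1 - s)"

definition B2_const :: "real \<Rightarrow> real \<Rightarrow> real" where
  "B2_const s \<alpha> = 2 * 4 powr (s + \<alpha>) * (\<Sum>\<^sub>\<infinity>j::int. \<bar>real_of_int j\<bar> powr (2 * \<alpha> - 4 - 2 * s))"

lemma B2_const_nonneg: "B2_const s \<alpha> \<ge> 0"
  by (simp add: B2_const_def infsum_nonneg)

lemma B2_kernel_nonneg: "B2_kernel s \<alpha> k k1 \<ge> 0"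
  by (simp add: B2_kernel_def)

lemma norm_B2_term_eq:
  assumes "k1 \<in> B2_index k"
  shows "\<bar>real_of_int k\<bar> powr (s + \<alpha>) * norm (B2_term t u v k k1)
           = B2_kernel s \<alpha> k k1 * (weighted_coeff s u k1 * weighted_coeff s v (k - k1))"
proof -
  have pos: "\<bar>real_of_int k1\<bar> > 0" "\<bar>real_of_int (k - k1)\<bar> > 0"
    using assms by (auto simp: B2_index_def)
  have inv: "x powr (-1 - s) * x powr s = 1 / x" if "x > 0" for x :: real
    using that by (simp add: powr_add[symmetric] powr_neg_one)
  have "norm (B2_term t u v k k1)
          = cmod (u k1) * cmod (v (k - k1)) / (\<bar>real_of_int k1\<bar> * \<bar>real_of_int (k - k1)\<bar>)"
    unfolding B2_term_def by (simp add: norm_mult norm_divide norm_of_int del: of_int_diff)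
  then show ?thesis
    unfolding B2_kernel_def weighted_coeff_def using inv[OF pos(1)] inv[OF pos(2)]
    by (simp add: field_simps)
qed

lemma B2_kernel_sq_bound:
  assumes "0 \<le> s + \<alpha>" "\<alpha> \<le> 1" "\<alpha> - s < 3/2"
  shows "(\<lambda>k1. (B2_kernel s \<alpha> k k1)\<^sup>2) summable_on B2_index k"
    and "(\<Sum>\<^sub>\<infinity>k1\<in>B2_index k. (B2_kernel s \<alpha> k k1)\<^sup>2) \<le> B2_const s \<alpha>"
proof -
  define p where "p = (\<lambda>j::int. \<bar>real_of_int j\<bar> powr (2 * \<alpha> - 4 - 2 * s))"
  define dominant where "dominant = (\<lambda>k1. 4 powr (s + \<alpha>) * (p k1 + p (k - k1)))"
  have p: "(p has_sum (\<Sum>\<^sub>\<infinity>j. p j)) UNIV"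
    unfolding p_def using assms by (intro has_sum_infsum summable_on_int_abs_powr) simp
  have "(dominant has_sum (4 powr (s + \<alpha>) * ((\<Sum>\<^sub>\<infinity>j. p j) + (\<Sum>\<^sub>\<infinity>j. p j)))) UNIV"
    unfolding dominant_def by (intro has_sum_cmult_right has_sum_add p has_sum_reflect[THEN iffD2])
  also have "4 powr (s + \<alpha>) * ((\<Sum>\<^sub>\<infinity>j. p j) + (\<Sum>\<^sub>\<infinity>j. p j)) = B2_const s \<alpha>"
    by (simp add: B2_const_def p_def)
  finally have dominant: "dominant summable_on UNIV" "(\<Sum>\<^sub>\<infinity>k1. dominant k1) = B2_const s \<alpha>"
    by (auto simp: has_sum_imp_summable infsumI)
  have le: "(B2_kernel s \<alpha> k k1)\<^sup>2 \<le> dominant k1" if "k1 \<in> B2_index k" for k1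
  proof -
    have "\<bar>real_of_int k1\<bar> \<ge> 1" "\<bar>real_of_int (k - k1)\<bar> \<ge> 1"
      using that by (auto simp: B2_index_def)
    moreover have "\<bar>real_of_int k\<bar> \<le> \<bar>real_of_int k1\<bar> + \<bar>real_of_int (k - k1)\<bar>"
      by simp
    ultimately show ?thesis
      unfolding B2_kernel_def dominant_def p_def
      by (intro powr_kernel_sq_le assms abs_ge_zero)
  qed
  show summable: "(\<lambda>k1. (B2_kernel s \<alpha> k k1)\<^sup>2) summable_on B2_index k"
    by (rule summable_on_comparison_test[OF summable_on_subset_banach[OF dominant(1)]])
       (auto simp: le)
  have "dominant k1 \<ge> 0" for k1
    by (simp add: dominant_def p_def)
  then show "(\<Sum>\<^sub>\<infinity>k1\<in>B2_index k. (B2_kernel s \<alpha> k k1)\<^sup>2) \<le> B2_const s \<alpha>"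
    using infsum_mono_neutral[OF summable dominant(1)] le by (simp add: dominant(2))
qed

lemma B2_coeff_bound:
  assumes s_\<alpha>: "0 \<le> s + \<alpha>" "\<alpha> \<le> 1" "\<alpha> - s < 3/2" and "k \<noteq> 0"
    and u: "in_Hdot s u" and v: "in_Hdot s v"
  shows "(\<lambda>k1. norm (B2_term t u v k k1)) summable_on B2_index k"
    and "(weighted_coeff (s + \<alpha>) (B2 t u v) k)\<^sup>2
           \<le> B2_const s \<alpha> * (\<Sum>\<^sub>\<infinity>j. (weighted_coeff s u j)\<^sup>2 * (weighted_coeff s v (k - j))\<^sup>2)"
proof -
  let ?a = "\<lambda>k1. weighted_coeff s u k1 * weighted_coeff s v (k - k1)"
  let ?K = "B2_kernel s \<alpha> k"
  let ?I = "B2_index k"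
  have conv: "(\<lambda>k1. (?a k1)\<^sup>2) summable_on UNIV"
    using u v unfolding in_Hdot_iff power_mult_distrib
    by (intro summable_on_convolution) simp_all
  have a_sq: "(\<lambda>k1. (?a k1)\<^sup>2) summable_on ?I"
    using conv by (rule summable_on_subset_banach) simp
  have "(\<Sum>\<^sub>\<infinity>k1\<in>?I. (?a k1)\<^sup>2) \<le> (\<Sum>\<^sub>\<infinity>k1. (?a k1)\<^sup>2)"
    by (rule infsum_mono_neutral[OF a_sq conv]) simp_all
  with B2_kernel_sq_bound(2)[OF s_\<alpha>] have CS_bound:
    "(\<Sum>\<^sub>\<infinity>k1\<in>?I. (?K k1)\<^sup>2) * (\<Sum>\<^sub>\<infinity>k1\<in>?I. (?a k1)\<^sup>2) \<le> B2_const s \<alpha> * (\<Sum>\<^sub>\<infinity>k1. (?a k1)\<^sup>2)"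
    by (intro mult_mono infsum_nonneg) (simp_all add: B2_const_nonneg)
  have a_nonneg: "?a k1 \<ge> 0" for k1
    by (simp add: weighted_coeff_nonneg)
  note CS = infsum_Cauchy_Schwarz[OF B2_kernel_sq_bound(1)[OF s_\<alpha>] a_sq B2_kernel_nonneg a_nonneg]
  have weight_pos: "\<bar>real_of_int k\<bar> powr (s + \<alpha>) > 0"
    using \<open>k \<noteq> 0\<close> by simp
  have norm_eq: "norm (B2_term t u v k k1) = inverse (\<bar>real_of_int k\<bar> powr (s + \<alpha>)) * (?K k1 * ?a k1)"
    if "k1 \<in> ?I" for k1
    using norm_B2_term_eq[OF that, of s \<alpha> t u v] weight_pos by (simp add: field_simps)
  show summable: "(\<lambda>k1. norm (B2_term t u v k k1)) summable_on ?I"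
    by (subst summable_on_cong[OF norm_eq]) (simp_all add: summable_on_cmult_right CS(1))
  have "weighted_coeff (s + \<alpha>) (B2 t u v) k
          \<le> \<bar>real_of_int k\<bar> powr (s + \<alpha>) * (\<Sum>\<^sub>\<infinity>k1\<in>?I. norm (B2_term t u v k k1))"
    unfolding weighted_coeff_def B2_def
    by (intro mult_left_mono norm_infsum_bound summable) simp
  also have "\<dots> = (\<Sum>\<^sub>\<infinity>k1\<in>?I. ?K k1 * ?a k1)"
    by (subst infsum_cmult_right[OF summable, symmetric]) (auto intro: infsum_cong simp: norm_B2_term_eq)
  finally have "(weighted_coeff (s + \<alpha>) (B2 t u v) k)\<^sup>2 \<le> (\<Sum>\<^sub>\<infinity>k1\<in>?I. ?K k1 * ?a k1)\<^sup>2"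
    by (intro power_mono weighted_coeff_nonneg)
  also have "\<dots> \<le> B2_const s \<alpha> * (\<Sum>\<^sub>\<infinity>k1. (?a k1)\<^sup>2)"
    using CS(2) CS_bound by linarith
  finally show "(weighted_coeff (s + \<alpha>) (B2 t u v) k)\<^sup>2
           \<le> B2_const s \<alpha> * (\<Sum>\<^sub>\<infinity>j. (weighted_coeff s u j)\<^sup>2 * (weighted_coeff s v (k - j))\<^sup>2)"
    by (simp add: power_mult_distrib)
qed

theorem lemma7p4:
  fixes s \<alpha> :: real
  assumes "s + \<alpha> \<ge> 0" and "\<alpha> < 3/4" and "s > -3/4"
  shows "\<exists>C. \<forall>t u v. in_Hdot s u \<longrightarrow> in_Hdot s v \<longrightarrow>
            (\<forall>k\<in>Z0. (\<lambda>k1. norm (B2_term t u v k k1)) summable_on B2_index k)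
          \<and> in_Hdot (s + \<alpha>) (B2 t u v)
          \<and> Hdot_norm (s + \<alpha>) (B2 t u v) \<le> C * Hdot_norm s u * Hdot_norm s v"
proof (intro exI[of _ "sqrt (B2_const s \<alpha>)"] allI impI conjI)
  have s_\<alpha>: "0 \<le> s + \<alpha>" "\<alpha> \<le> 1" "\<alpha> - s < 3/2"
    using assms by linarith+
  fix t u v assume u: "in_Hdot s u" and v: "in_Hdot s v"
  let ?U = "\<lambda>j. (weighted_coeff s u j)\<^sup>2" and ?V = "\<lambda>j. (weighted_coeff s v j)\<^sup>2"
  let ?conv = "\<lambda>k. \<Sum>\<^sub>\<infinity>j. ?U j * ?V (k - j)"
  let ?b = "\<lambda>k. (weighted_coeff (s + \<alpha>) (B2 t u v) k)\<^sup>2"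
  show "\<forall>k\<in>Z0. (\<lambda>k1. norm (B2_term t u v k k1)) summable_on B2_index k"
    using B2_coeff_bound(1)[OF s_\<alpha> _ u v] by (simp add: Z0_def)
  have conv: "?conv summable_on UNIV" "(\<Sum>\<^sub>\<infinity>k. ?conv k) \<le> (\<Sum>\<^sub>\<infinity>j. ?U j) * (\<Sum>\<^sub>\<infinity>j. ?V j)"
    using u v unfolding in_Hdot_iff by (intro infsum_convolution_le; simp)+
  have b_le: "?b k \<le> B2_const s \<alpha> * ?conv k" for k
    using B2_coeff_bound(2)[OF s_\<alpha> _ u v] by (cases "k = 0") (simp_all add: B2_const_nonneg infsum_nonneg)
  have b: "?b summable_on UNIV"
    by (rule summable_on_comparison_test[OF summable_on_cmult_right[OF conv(1)] b_le]) simp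
  then show "in_Hdot (s + \<alpha>) (B2 t u v)"
    by (simp add: in_Hdot_iff)
  have "(\<Sum>\<^sub>\<infinity>k. ?b k) \<le> (\<Sum>\<^sub>\<infinity>k. B2_const s \<alpha> * ?conv k)"
    by (rule infsum_mono[OF b summable_on_cmult_right[OF conv(1)] b_le])
  also have "\<dots> \<le> B2_const s \<alpha> * ((\<Sum>\<^sub>\<infinity>j. ?U j) * (\<Sum>\<^sub>\<infinity>j. ?V j))"
    unfolding infsum_cmult_right[OF conv(1)] by (intro mult_left_mono conv(2) B2_const_nonneg)
  finally show "Hdot_norm (s + \<alpha>) (B2 t u v) \<le> sqrt (B2_const s \<alpha>) * Hdot_norm s u * Hdot_norm s v"
    unfolding Hdot_norm_eq real_sqrt_mult[symmetric] mult.assoc by (rule real_sqrt_le_mono)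
qed

end
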